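(* In the setting of the context: (i) If $\omega\notin i\mathbb{R}$ and $|\omega_\Im|$ is large enough, then $\omega\notin W_\Omega(T)$. (ii) For sequences $\{\omega^n\}\subset W_\Omega(T)$ with $|\omega^n_\Re|\to\infty$ as $n\to\infty$, it holds that $\hat\beta(\omega^n)\sim-2\omega^n_\Im(\omega^n_\Re)^2/d$ and $\omega^n_\Im=O((\omega^n_\Re)^{-2})$. (iii) If $\omega\notin i\mathbb{R}\cup\partial\mathcal{D}$, then $\hat\beta(\omega)\ge0$ if and only if $\omega\in\Pi_\beta$. (iv) If $\omega\notin i\mathbb{R}\cup\partial\mathcal{D}$, then $\hat\alpha(\omega)\ge0$ if and only if $\omega\in\Pi_\alpha$.
   Context: Let $\mathcal{H}$ be a Hilbert space, $A$ a selfadjoint (possibly unbounded) operator in $\mathcal{H}$ and $B$ a nonzero bounded selfadjoint operator. Let $c\ge0$, $d>0$, $\delta_\pm:=\pm\sqrt{c-d^2/4}-id/2$ (principal square root). $W(A),W(B)\subset\mathbb{R}$ are the numerical ranges. For real $\alpha,\beta$ let $p_{(\alpha,\beta)}(\omega):=(\alpha-\omega^2)(c-id\omega-\omega^2)-\beta\omega^2$ with roots $r_1,\dots,r_4$ labelled continuously in $(\alpha,\beta)$ and extended by limits to $\overline{\mathbb{R}}\times\mathbb{R}$ ($\overline{\mathbb{R}}=\mathbb{R}\cup\{\pm\infty\}$), values in $\overline{\mathbb{C}}$. Let $\Omega:=\overline{W(A)}\times\overline{W(B)}$ (closure of $W(A)$ in $\overline{\mathbb{R}}$) and $W_\Omega(T):=\bigcup_{n=1}^4\bigcup_{(\alpha,\beta)\in\Omega}r_n(\alpha,\beta)$.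 Let $\mathcal{D}:=\{\omega:|\omega+ic/d|<c/d\}$. Write $\omega=\omega_\Re+i\omega_\Im$ and define $\hat\beta(\omega):=\frac{-2\omega_\Im\left((-\omega_\Re^2+\omega_\Im^2+d\omega_\Im+c)^2+\omega_\Re^2(2\omega_\Im+d)^2\right)}{d|\omega|^2+2c\omega_\Im}$, $\hat\alpha(\omega):=\frac{(2\omega_\Im+d)|\omega|^4}{d|\omega|^2+2c\omega_\Im}$ (defined for $\omega\notin\partial\mathcal{D}$). Let $\Pi_\beta:=\{\omega\in\mathbb{C}\setminus\overline{\mathcal{D}}:\omega_\Im\le0\}$ and $\Pi_\alpha:=\{\omega\in\mathbb{C}\setminus\overline{\mathcal{D}}:\omega_\Im\ge-d/2\}\cup\{\omega\in\mathcal{D}:\omega_\Im\le-d/2\}$. *)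

theory Defs
  imports "HOL-Analysis.Analysis" "HOL-Library.Landau_Symbols"
begin

definition pol :: "real \<Rightarrow> real \<Rightarrow> real \<Rightarrow> real \<Rightarrow> complex \<Rightarrow> complex" where
  "pol c d \<alpha> \<beta> \<omega> =
     (complex_of_real \<alpha> - \<omega>^2) * (complex_of_real c - \<i> * complex_of_real d * \<omega> - \<omega>^2)
     - complex_of_real \<beta> * \<omega>^2"

text \<open>For alpha = +-infinity the roots are defined as limits of the continuously labelled
  roots as alpha tends to +-infinity; the finite such limit values are exactly the
  complex numbers that are limits of sequences of roots of p_(a_k,beta) with a_k tending
  to alpha (the value infinity of the extended complex plane is not a complex number
  and is therefore not included).\<close>
definition ext_roots :: "real \<Rightarrow> real \<Rightarrow> ereal \<Rightarrow> real \<Rightarrow> complex set" where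
  "ext_roots c d \<alpha> \<beta> =
     (if \<bar>\<alpha>\<bar> \<noteq> \<infinity> then {\<omega>. pol c d (real_of_ereal \<alpha>) \<beta> \<omega> = 0}
      else {\<omega>. \<exists>(a :: nat \<Rightarrow> real) (w :: nat \<Rightarrow> complex).
                 ((\<lambda>k. ereal (a k)) \<longlongrightarrow> \<alpha>) sequentially \<and>
                 (\<forall>k. pol c d (a k) \<beta> (w k) = 0) \<and> (w \<longlonglongrightarrow> \<omega>)})"

definition W_Omega :: "real \<Rightarrow> real \<Rightarrow> (ereal \<times> real) set \<Rightarrow> complex set" where
  "W_Omega c d \<Omega> = (\<Union>(\<alpha>, \<beta>) \<in> \<Omega>. ext_roots c d \<alpha> \<beta>)"

definition Omega :: "real set \<Rightarrow> real set \<Rightarrow> (ereal \<times> real) set" where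
  "Omega WA WB = closure (ereal ` WA) \<times> closure WB"

definition diskD :: "real \<Rightarrow> real \<Rightarrow> complex set" where
  "diskD c d = ball (- \<i> * complex_of_real (c / d)) (c / d)"

text \<open>The boundary circle |w + i c/d| = c/d (the zero set of the denominators).\<close>
definition circD :: "real \<Rightarrow> real \<Rightarrow> complex set" where
  "circD c d = sphere (- \<i> * complex_of_real (c / d)) (c / d)"

definition beta_hat :: "real \<Rightarrow> real \<Rightarrow> complex \<Rightarrow> real" where
  "beta_hat c d \<omega> =
     (- 2 * Im \<omega> * ((- ((Re \<omega>)^2) + (Im \<omega>)^2 + d * Im \<omega> + c)^2
                     + (Re \<omega>)^2 * (2 * Im \<omega> + d)^2))
     / (d * (cmod \<omega>)^2 + 2 * c * Im \<omega>)"

definition alpha_hat :: "real \<Rightarrow> real \<Rightarrow> complex \<Rightarrow> real" where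
  "alpha_hat c d \<omega> = ((2 * Im \<omega> + d) * (cmod \<omega>)^4) / (d * (cmod \<omega>)^2 + 2 * c * Im \<omega>)"

definition Pi_beta :: "real \<Rightarrow> real \<Rightarrow> complex set" where
  "Pi_beta c d = {\<omega>. \<omega> \<notin> closure (diskD c d) \<and> Im \<omega> \<le> 0}"

definition Pi_alpha :: "real \<Rightarrow> real \<Rightarrow> complex set" where
  "Pi_alpha c d = {\<omega>. \<omega> \<notin> closure (diskD c d) \<and> Im \<omega> \<ge> - d / 2}
                 \<union> {\<omega>. \<omega> \<in> diskD c d \<and> Im \<omega> \<le> - d / 2}"

end

theory Submission
  imports Defs
begin

text \<open>Write \<open>pol c d \<alpha> \<beta> \<omega> = (\<alpha> - \<omega>\<^sup>2) q - \<beta> \<omega>\<^sup>2\<close> with \<open>q = c - i d \<omega> - \<omega>\<^sup>2\<close>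
  (\<open>damping\<close> below). Multiplying \<open>\<alpha> q = \<omega>\<^sup>2 (q + \<beta>)\<close> by \<open>cnj q\<close> and taking imaginary
  parts eliminates \<open>\<alpha>\<close>: a root off the imaginary axis of a polynomial with finite \<open>\<alpha>\<close>
  satisfies \<open>\<beta> = beta_hat \<omega>\<close>, while the roots belonging to \<open>\<alpha> = \<plusminus>\<infinity>\<close> are zeros of \<open>q\<close>
  and hence bounded. As \<open>|q| \<ge> |\<omega>|\<^sup>2/2\<close> for large \<open>|\<omega>|\<close>, \<open>|beta_hat \<omega>|\<close> grows like
  \<open>|Im \<omega>| |\<omega>|\<^sup>2\<close>, so boundedness of \<open>W(B)\<close> forces \<open>Im \<omega> = O(|\<omega>|\<^sup>-\<^sup>2)\<close> far out in
  \<open>W_Omega\<close>. This gives (i) and the bound in (ii); once \<open>Im \<omega> \<rightarrow> 0\<close>, the quotient defining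
  \<open>beta_hat \<omega>\<close> is asymptotic to \<open>-2 Im \<omega> (Re \<omega>)\<^sup>2/d\<close>. Parts (iii) and (iv) are sign
  bookkeeping: the common denominator \<open>d |\<omega>|\<^sup>2 + 2 c Im \<omega>\<close> of \<open>beta_hat\<close> and \<open>alpha_hat\<close>
  is negative exactly on the disc \<open>diskD\<close> and zero exactly on its boundary \<open>circD\<close>, and \<open>q\<close>
  does not vanish off the imaginary axis and \<open>circD\<close>.\<close>

section \<open>The characteristic polynomial\<close>

definition damping :: "real \<Rightarrow> real \<Rightarrow> complex \<Rightarrow> complex" where
  "damping c d \<omega> = complex_of_real c - \<i> * complex_of_real d * \<omega> - \<omega>^2"

definition hat_denom :: "real \<Rightarrow> real \<Rightarrow> complex \<Rightarrow> real" where
  "hat_denom c d \<omega> = d * (cmod \<omega>)^2 + 2 * c * Im \<omega>"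

lemma pol_eq_damping:
  "pol c d \<alpha> \<beta> \<omega> = (complex_of_real \<alpha> - \<omega>^2) * damping c d \<omega> - complex_of_real \<beta> * \<omega>^2"
  by (simp add: pol_def damping_def)

lemma Re_damping: "Re (damping c d \<omega>) = c + d * Im \<omega> - (Re \<omega>)^2 + (Im \<omega>)^2"
  by (simp add: damping_def power2_eq_square)

lemma Im_damping: "Im (damping c d \<omega>) = - Re \<omega> * (2 * Im \<omega> + d)"
  by (simp add: damping_def power2_eq_square algebra_simps)

lemma norm_damping_sq:
  "(cmod (damping c d \<omega>))^2 = (c + d * Im \<omega> - (Re \<omega>)^2 + (Im \<omega>)^2)^2 + (Re \<omega>)^2 * (2 * Im \<omega> + d)^2"
  by (simp add: cmod_power2 Re_damping Im_damping power_mult_distrib)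

lemma beta_hat_eq: "beta_hat c d \<omega> = - 2 * Im \<omega> * (cmod (damping c d \<omega>))^2 / hat_denom c d \<omega>"
  by (simp add: beta_hat_def hat_denom_def norm_damping_sq algebra_simps)

lemma alpha_hat_eq: "alpha_hat c d \<omega> = (2 * Im \<omega> + d) * (cmod \<omega>)^4 / hat_denom c d \<omega>"
  by (simp add: alpha_hat_def hat_denom_def)

lemma Im_sq_mult_cnj_damping: "Im (\<omega>^2 * cnj (damping c d \<omega>)) = Re \<omega> * hat_denom c d \<omega>"
  unfolding hat_denom_def cmod_power2 by (simp add: damping_def power2_eq_square algebra_simps)

lemma pol_root_beta:
  assumes "pol c d \<alpha> \<beta> \<omega> = 0" "Re \<omega> \<noteq> 0"
  shows "\<beta> * hat_denom c d \<omega> = - 2 * Im \<omega> * (cmod (damping c d \<omega>))^2"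
proof -
  let ?q = "damping c d \<omega>" and ?r = "(cmod (damping c d \<omega>))^2"
  have root: "complex_of_real \<alpha> * ?q = \<omega>^2 * (?q + complex_of_real \<beta>)"
    using assms(1) by (simp add: pol_eq_damping algebra_simps)
  have "complex_of_real \<alpha> * (?q * cnj ?q) = (complex_of_real \<alpha> * ?q) * cnj ?q"
    by (simp only: mult.assoc)
  also have "\<dots> = \<omega>^2 * (?q * cnj ?q) + complex_of_real \<beta> * (\<omega>^2 * cnj ?q)"
    unfolding root by (simp add: algebra_simps)
  finally have "complex_of_real (\<alpha> * ?r) = \<omega>^2 * complex_of_real ?r + complex_of_real \<beta> * (\<omega>^2 * cnj ?q)"
    by (simp only: of_real_mult complex_norm_square)
  from arg_cong[where f=Im, OF this] have "0 = Im (\<omega>^2) * ?r + \<beta> * Im (\<omega>^2 * cnj ?q)"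
    by simp
  then have "Re \<omega> * (2 * Im \<omega> * ?r + \<beta> * hat_denom c d \<omega>) = 0"
    by (simp only: Im_sq_mult_cnj_damping) (simp add: power2_eq_square algebra_simps)
  with assms(2) show ?thesis by simp
qed

section \<open>The disc and the signs of \<open>beta_hat\<close> and \<open>alpha_hat\<close>\<close>

lemma hat_denom_eq_dist:
  assumes "d \<noteq> 0"
  shows "hat_denom c d \<omega> = d * ((dist (- \<i> * complex_of_real (c / d)) \<omega>)^2 - (c / d)^2)"
  unfolding hat_denom_def dist_norm cmod_power2 using assms
  by (simp add: power2_eq_square field_simps)

lemma mem_diskD_iff:
  assumes "c \<ge> 0" "d > 0"
  shows "\<omega> \<in> diskD c d \<longleftrightarrow> hat_denom c d \<omega> < 0"
proof -
  have "\<omega> \<in> diskD c d \<longleftrightarrow> (dist (- \<i> * complex_of_real (c / d)) \<omega>)^2 < (c / d)^2"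
    unfolding diskD_def mem_ball using assms by (simp add: not_le[symmetric])
  then show ?thesis
    using assms by (simp add: hat_denom_eq_dist mult_less_0_iff)
qed

lemma mem_circD_iff:
  assumes "c \<ge> 0" "d > 0"
  shows "\<omega> \<in> circD c d \<longleftrightarrow> hat_denom c d \<omega> = 0"
proof -
  have "\<omega> \<in> circD c d \<longleftrightarrow> (dist (- \<i> * complex_of_real (c / d)) \<omega>)^2 = (c / d)^2"
    unfolding circD_def mem_sphere using assms by simp
  then show ?thesis
    using assms by (simp add: hat_denom_eq_dist)
qed

lemma closure_diskD_subset: "closure (diskD c d) \<subseteq> diskD c d \<union> circD c d"
proof -
  have "closure (diskD c d) \<subseteq> cball (- \<i> * complex_of_real (c / d)) (c / d)"
    unfolding diskD_def by (intro closure_minimal ball_subset_cball closed_cball)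
  then show ?thesis
    unfolding diskD_def circD_def by auto
qed

lemma not_in_closure_diskD_iff:
  assumes "c \<ge> 0" "d > 0" "\<omega> \<notin> circD c d"
  shows "\<omega> \<notin> closure (diskD c d) \<longleftrightarrow> 0 < hat_denom c d \<omega>"
proof -
  have "\<omega> \<in> closure (diskD c d) \<longleftrightarrow> \<omega> \<in> diskD c d"
    using closure_diskD_subset[of c d] closure_subset[of "diskD c d"] assms(3) by blast
  moreover have "hat_denom c d \<omega> \<noteq> 0"
    using mem_circD_iff[OF assms(1,2)] assms(3) by simp
  ultimately show ?thesis
    using mem_diskD_iff[OF assms(1,2)] by auto
qed

lemma damping_neq_0:
  assumes "Re \<omega> \<noteq> 0" "hat_denom c d \<omega> \<noteq> 0"
  shows "damping c d \<omega> \<noteq> 0"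
proof
  assume q: "damping c d \<omega> = 0"
  then have "Im (damping c d \<omega>) = 0"
    by simp
  then have "2 * Im \<omega> + d = 0"
    using assms(1) by (simp add: Im_damping)
  moreover have "hat_denom c d \<omega> = (2 * Im \<omega> + d) * (d * Im \<omega> + c) - d * Re (damping c d \<omega>)"
    unfolding hat_denom_def cmod_power2 by (simp add: Re_damping power2_eq_square algebra_simps)
  ultimately show False
    using assms(2) q by simp
qed

lemma hat_denom_neg_imp_Im_neg:
  assumes "c \<ge> 0" "d \<ge> 0" "hat_denom c d \<omega> < 0"
  shows "Im \<omega> < 0"
proof -
  have "0 \<le> d * (cmod \<omega>)^2"
    using assms(2) by simp
  then have "c * Im \<omega> < 0"
    using assms(3) unfolding hat_denom_def by linarith
  then show ?thesis
    using assms(1) by (simp add: mult_less_0_iff)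
qed

lemma zero_le_mult_divide_iff:
  fixes a p D :: real
  assumes "0 < p"
  shows "0 \<le> a * p / D \<longleftrightarrow> 0 \<le> a * D"
  using assms by (simp add: zero_le_divide_iff zero_le_mult_iff mult_le_0_iff)

lemma beta_hat_nonneg_iff:
  assumes "c \<ge> 0" "d > 0" "Re \<omega> \<noteq> 0" "\<omega> \<notin> circD c d"
  shows "beta_hat c d \<omega> \<ge> 0 \<longleftrightarrow> \<omega> \<in> Pi_beta c d"
proof -
  have D: "hat_denom c d \<omega> \<noteq> 0"
    using assms mem_circD_iff by blast
  then have "0 < (cmod (damping c d \<omega>))^2"
    using damping_neq_0[OF assms(3)] by simp
  then have "beta_hat c d \<omega> \<ge> 0 \<longleftrightarrow> 0 \<le> - 2 * Im \<omega> * hat_denom c d \<omega>"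
    unfolding beta_hat_eq by (rule zero_le_mult_divide_iff)
  also have "\<dots> \<longleftrightarrow> 0 < hat_denom c d \<omega> \<and> Im \<omega> \<le> 0"
    using D hat_denom_neg_imp_Im_neg[of c d \<omega>] assms(1,2) by (auto simp: zero_le_mult_iff mult_le_0_iff)
  finally show ?thesis
    unfolding Pi_beta_def using not_in_closure_diskD_iff[OF assms(1,2,4)] by simp
qed

lemma alpha_hat_nonneg_iff:
  assumes "c \<ge> 0" "d > 0" "Re \<omega> \<noteq> 0" "\<omega> \<notin> circD c d"
  shows "alpha_hat c d \<omega> \<ge> 0 \<longleftrightarrow> \<omega> \<in> Pi_alpha c d"
proof -
  have D: "hat_denom c d \<omega> \<noteq> 0"
    using assms mem_circD_iff by blast
  have "0 < (cmod \<omega>)^4"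
    using assms(3) by (simp add: complex_eq_iff)
  then have "alpha_hat c d \<omega> \<ge> 0 \<longleftrightarrow> 0 \<le> (2 * Im \<omega> + d) * hat_denom c d \<omega>"
    unfolding alpha_hat_eq by (rule zero_le_mult_divide_iff)
  also have "\<dots> \<longleftrightarrow> (0 < hat_denom c d \<omega> \<and> Im \<omega> \<ge> - d / 2) \<or> (hat_denom c d \<omega> < 0 \<and> Im \<omega> \<le> - d / 2)"
    using D by (auto simp: zero_le_mult_iff)
  finally show ?thesis
    unfolding Pi_alpha_def using not_in_closure_diskD_iff[OF assms(1,2,4)] mem_diskD_iff[OF assms(1,2)]
    by auto
qed

section \<open>Growth of \<open>beta_hat\<close>\<close>

lemma norm_damping_ge: "(cmod \<omega>)^2 - \<bar>d\<bar> * cmod \<omega> - \<bar>c\<bar> \<le> cmod (damping c d \<omega>)"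
proof -
  have "\<omega>^2 = (complex_of_real c - \<i> * complex_of_real d * \<omega>) - damping c d \<omega>"
    by (simp add: damping_def)
  then have "cmod (\<omega>^2) \<le> cmod (complex_of_real c) + cmod (\<i> * complex_of_real d * \<omega>) + cmod (damping c d \<omega>)"
    by (metis norm_triangle_ineq4 add_right_mono order_trans)
  then show ?thesis
    by (simp add: norm_mult norm_power)
qed

lemma damping_eq_0_imp_norm_le:
  assumes "damping c d \<omega> = 0"
  shows "cmod \<omega> \<le> \<bar>c\<bar> + \<bar>d\<bar> + 1"
proof (rule ccontr)
  assume "\<not> ?thesis"
  then have "1 < cmod \<omega>" and "(\<bar>c\<bar> + \<bar>d\<bar> + 1) * cmod \<omega> < cmod \<omega> * cmod \<omega>"
    by (auto intro!: mult_strict_right_mono)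
  moreover have "\<bar>c\<bar> \<le> \<bar>c\<bar> * cmod \<omega>"
    using \<open>1 < cmod \<omega>\<close> by (simp add: mult_le_cancel_left1)
  ultimately show False
    using norm_damping_ge[of \<omega> d c] assms by (simp add: power2_eq_square algebra_simps)
qed

lemma hat_denom_pos:
  assumes "c \<ge> 0" "2 * c < d * cmod \<omega>"
  shows "0 < hat_denom c d \<omega>"
proof -
  have "- cmod \<omega> \<le> Im \<omega>"
    using abs_Im_le_cmod[of \<omega>] by linarith
  then have "- (c * cmod \<omega>) \<le> c * Im \<omega>"
    using mult_left_mono[OF _ assms(1)] by fastforce
  moreover have "0 < cmod \<omega>"
    using assms by (cases "\<omega> = 0") auto
  then have "0 < cmod \<omega> * (d * cmod \<omega> - 2 * c)"
    using assms(2) by simp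
  ultimately show ?thesis
    unfolding hat_denom_def by (simp add: power2_eq_square algebra_simps)
qed

lemma hat_denom_le:
  assumes "c \<ge> 0" "1 \<le> cmod \<omega>"
  shows "hat_denom c d \<omega> \<le> (d + 2 * c) * (cmod \<omega>)^2"
proof -
  have "Im \<omega> \<le> (cmod \<omega>)^2"
    using abs_Im_le_cmod[of \<omega>] assms(2) mult_right_mono[OF assms(2) norm_ge_zero[of \<omega>]]
    by (simp add: power2_eq_square)
  then have "c * Im \<omega> \<le> c * (cmod \<omega>)^2"
    using assms(1) by (rule mult_left_mono)
  then show ?thesis
    unfolding hat_denom_def by (simp add: algebra_simps)
qed

lemma norm_damping_ge_half:
  assumes "1 \<le> cmod \<omega>" "2 * (\<bar>c\<bar> + \<bar>d\<bar>) \<le> cmod \<omega>"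
  shows "(cmod \<omega>)^2 / 2 \<le> cmod (damping c d \<omega>)"
proof -
  have "\<bar>d\<bar> * cmod \<omega> + \<bar>c\<bar> \<le> (\<bar>c\<bar> + \<bar>d\<bar>) * cmod \<omega>"
    using assms(1) by (simp add: algebra_simps mult_le_cancel_left1)
  also have "\<dots> \<le> (cmod \<omega>)^2 / 2"
    using mult_right_mono[OF assms(2) norm_ge_zero[of \<omega>]] by (simp add: power2_eq_square algebra_simps)
  finally show ?thesis
    using norm_damping_ge[of \<omega> d c] by simp
qed

lemma abs_beta_hat_ge:
  assumes "c \<ge> 0" "d > 0" "1 \<le> cmod \<omega>" "2 * (c + d) \<le> cmod \<omega>" "2 * c < d * cmod \<omega>"
  shows "\<bar>Im \<omega>\<bar> * (cmod \<omega>)^2 \<le> 2 * (d + 2 * c) * \<bar>beta_hat c d \<omega>\<bar>"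
proof -
  let ?D = "hat_denom c d \<omega>" and ?q = "cmod (damping c d \<omega>)"
  have D: "0 < ?D"
    using hat_denom_pos assms by blast
  have "((cmod \<omega>)^2 / 2)^2 \<le> ?q^2"
    using norm_damping_ge_half[of \<omega> c d] assms by (intro power_mono) auto
  then have q: "(cmod \<omega>)^4 \<le> 4 * ?q^2"
    by (simp add: power_divide flip: power_mult)
  have "\<bar>Im \<omega>\<bar> * (cmod \<omega>)^2 * ?D \<le> \<bar>Im \<omega>\<bar> * (cmod \<omega>)^2 * ((d + 2 * c) * (cmod \<omega>)^2)"
    using hat_denom_le[OF assms(1,3)] by (intro mult_left_mono) auto
  also have "\<dots> = (d + 2 * c) * \<bar>Im \<omega>\<bar> * (cmod \<omega>)^4"
    by (simp add: power2_eq_square power4_eq_xxxx)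
  also have "\<dots> \<le> (d + 2 * c) * \<bar>Im \<omega>\<bar> * (4 * ?q^2)"
    using q assms(1,2) by (intro mult_left_mono) auto
  also have "\<dots> = 2 * (d + 2 * c) * \<bar>beta_hat c d \<omega>\<bar> * ?D"
    using D by (simp add: beta_hat_eq abs_mult)
  finally show ?thesis
    using D by simp
qed

section \<open>Roots far from the origin\<close>

lemma eventually_nonzero_if_abs_at_top:
  fixes f :: "'a \<Rightarrow> real"
  assumes "filterlim (\<lambda>n. \<bar>f n\<bar>) at_top F"
  shows "eventually (\<lambda>n. f n \<noteq> 0) F"
proof -
  have "eventually (\<lambda>n. 0 < \<bar>f n\<bar>) F"
    using assms unfolding filterlim_at_top_dense by blast
  then show ?thesis
    by eventually_elim auto
qed

lemma tendsto_inverse_square_0: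
  fixes f :: "'a \<Rightarrow> real"
  assumes "filterlim (\<lambda>n. \<bar>f n\<bar>) at_top F"
  shows "((\<lambda>n. 1 / (f n)^2) \<longlongrightarrow> 0) F"
proof -
  have "((\<lambda>n. (inverse \<bar>f n\<bar>)^2) \<longlongrightarrow> 0^2) F"
    by (intro tendsto_intros tendsto_inverse_0_at_top assms)
  then show ?thesis
    by (simp add: power_one_over inverse_eq_divide)
qed

lemma ereal_tendsto_infinity_imp_abs_at_top:
  assumes "\<bar>\<alpha>\<bar> = (\<infinity> :: ereal)" "((\<lambda>k. ereal (a k)) \<longlongrightarrow> \<alpha>) F"
  shows "filterlim (\<lambda>k. \<bar>a k\<bar>) at_top F"
proof -
  have "((\<lambda>k. \<bar>ereal (a k)\<bar>) \<longlongrightarrow> \<infinity>) F"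
    using tendsto_abs_ereal[OF assms(2)] assms(1) by simp
  then show ?thesis
    by (simp add: tendsto_PInfty_eq_at_top)
qed

lemma ext_roots_infinity_damping_eq_0:
  assumes "\<bar>\<alpha>\<bar> = \<infinity>" "\<omega> \<in> ext_roots c d \<alpha> \<beta>"
  shows "damping c d \<omega> = 0"
proof -
  obtain a w where a: "((\<lambda>k. ereal (a k)) \<longlongrightarrow> \<alpha>) sequentially"
    and roots: "\<And>k. pol c d (a k) \<beta> (w k) = 0" and w: "w \<longlonglongrightarrow> \<omega>"
    using assms unfolding ext_roots_def by auto
  have a_top: "filterlim (\<lambda>k. \<bar>a k\<bar>) at_top sequentially"
    by (rule ereal_tendsto_infinity_imp_abs_at_top[OF assms(1) a])
  then have "((\<lambda>k. norm (inverse (complex_of_real (a k)))) \<longlongrightarrow> 0) sequentially"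
    using tendsto_inverse_0_at_top by (simp add: norm_inverse)
  then have inv: "((\<lambda>k. inverse (complex_of_real (a k))) \<longlongrightarrow> 0) sequentially"
    by (rule tendsto_norm_zero_cancel)
  let ?r = "\<lambda>k. (w k)^2 * (damping c d (w k) + complex_of_real \<beta>) * inverse (complex_of_real (a k))"
  have "(?r \<longlongrightarrow> \<omega>^2 * (damping c d \<omega> + complex_of_real \<beta>) * 0) sequentially"
    unfolding damping_def by (intro tendsto_intros w inv)
  then have "(?r \<longlongrightarrow> 0) sequentially"
    by simp
  moreover have "eventually (\<lambda>k. ?r k = damping c d (w k)) sequentially"
    using eventually_nonzero_if_abs_at_top[OF a_top]
  proof eventually_elim
    case (elim k)
    have "complex_of_real (a k) * damping c d (w k) = (w k)^2 * (damping c d (w k) + complex_of_real \<beta>)"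
      using roots[of k] by (simp add: pol_eq_damping algebra_simps)
    then have "?r k = complex_of_real (a k) * damping c d (w k) * inverse (complex_of_real (a k))"
      by simp
    also have "\<dots> = damping c d (w k)"
      using elim by simp
    finally show ?case .
  qed
  ultimately have "((\<lambda>k. damping c d (w k)) \<longlongrightarrow> 0) sequentially"
    by (rule Lim_transform_eventually)
  moreover have "((\<lambda>k. damping c d (w k)) \<longlongrightarrow> damping c d \<omega>) sequentially"
    unfolding damping_def by (intro tendsto_intros w)
  ultimately show ?thesis
    using LIMSEQ_unique by blast
qed

text \<open>Beyond this radius the hypotheses of \<open>abs_beta_hat_ge\<close> hold and no root
  belonging to \<open>\<alpha> = \<plusminus>\<infinity>\<close> lies.\<close>
lemma W_Omega_Im_norm_bound:
  assumes "c \<ge> 0" "d > 0" "\<forall>(\<alpha>, \<beta>) \<in> \<Omega>. \<bar>\<beta>\<bar> \<le> M"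
    and "\<omega> \<in> W_Omega c d \<Omega>" "Re \<omega> \<noteq> 0" "2 * (c + d) + 2 * c / d + 1 \<le> cmod \<omega>"
  shows "\<bar>Im \<omega>\<bar> * (cmod \<omega>)^2 \<le> 2 * (d + 2 * c) * M"
proof -
  obtain \<alpha> \<beta> where "(\<alpha>, \<beta>) \<in> \<Omega>" and root: "\<omega> \<in> ext_roots c d \<alpha> \<beta>"
    using assms(4) unfolding W_Omega_def by auto
  with assms(3) have \<beta>: "\<bar>\<beta>\<bar> \<le> M"
    by auto
  have "0 \<le> 2 * c / d"
    using assms(1,2) by simp
  then have norm_ge: "2 * c + 2 * d + 1 \<le> cmod \<omega>"
    using assms(6) by (simp add: distrib_left)
  have "2 * c / d < cmod \<omega>"
    using assms(1,2) by (intro less_le_trans[OF _ assms(6)]) simp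
  then have far: "2 * c < d * cmod \<omega>"
    using assms(2) by (simp add: pos_divide_less_eq mult.commute)
  have large: "1 \<le> cmod \<omega>" "2 * (c + d) \<le> cmod \<omega>"
    using norm_ge assms(1,2) by simp_all
  have finite: "\<bar>\<alpha>\<bar> \<noteq> \<infinity>"
  proof
    assume "\<bar>\<alpha>\<bar> = \<infinity>"
    then have "damping c d \<omega> = 0"
      by (rule ext_roots_infinity_damping_eq_0[OF _ root])
    then have "cmod \<omega> \<le> \<bar>c\<bar> + \<bar>d\<bar> + 1"
      by (rule damping_eq_0_imp_norm_le)
    then show False
      using norm_ge assms(1,2) by simp
  qed
  then have "pol c d (real_of_ereal \<alpha>) \<beta> \<omega> = 0"
    using root unfolding ext_roots_def by simp
  then have "\<beta> * hat_denom c d \<omega> = - 2 * Im \<omega> * (cmod (damping c d \<omega>))^2"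
    using assms(5) by (rule pol_root_beta)
  then have "\<beta> = beta_hat c d \<omega>"
    using hat_denom_pos[OF assms(1) far] by (simp add: beta_hat_eq field_simps)
  then have "2 * (d + 2 * c) * \<bar>beta_hat c d \<omega>\<bar> \<le> 2 * (d + 2 * c) * M"
    using \<beta> assms(1,2) by (intro mult_left_mono) auto
  with abs_beta_hat_ge[OF assms(1,2) large far] show ?thesis
    by linarith
qed

lemma W_Omega_excludes_large_Im:
  assumes "c \<ge> 0" "d > 0" "\<forall>(\<alpha>, \<beta>) \<in> \<Omega>. \<bar>\<beta>\<bar> \<le> M"
  shows "\<exists>R. \<forall>\<omega>. Re \<omega> \<noteq> 0 \<and> \<bar>Im \<omega>\<bar> > R \<longrightarrow> \<omega> \<notin> W_Omega c d \<Omega>"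
proof (intro exI allI impI notI)
  let ?K = "2 * (c + d) + 2 * c / d + 1" and ?C = "2 * (d + 2 * c) * M"
  fix \<omega>
  assume \<omega>: "Re \<omega> \<noteq> 0 \<and> \<bar>Im \<omega>\<bar> > max ?K ?C" and W: "\<omega> \<in> W_Omega c d \<Omega>"
  have "1 \<le> ?K"
    using assms(1,2) by simp
  then have K: "?K \<le> cmod \<omega>" and "1 \<le> cmod \<omega>"
    using \<omega> abs_Im_le_cmod[of \<omega>] by linarith+
  then have "\<bar>Im \<omega>\<bar> \<le> \<bar>Im \<omega>\<bar> * (cmod \<omega>)^2"
    by (simp add: mult_le_cancel_left1 one_le_power)
  also have "\<dots> \<le> ?C"
    using W_Omega_Im_norm_bound[OF assms W _ K] \<omega> by blast
  finally show False
    using \<omega> by linarith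
qed

section \<open>Asymptotics of \<open>beta_hat\<close>\<close>

lemma norm_damping_sq_asymp_equiv:
  assumes "((\<lambda>n. Im (w n)) \<longlongrightarrow> 0) F" "filterlim (\<lambda>n. \<bar>Re (w n)\<bar>) at_top F"
  shows "(\<lambda>n. (cmod (damping c d (w n)))^2) \<sim>[F] (\<lambda>n. (Re (w n))^4)"
proof (rule asymp_equivI')
  let ?A = "\<lambda>n. c + d * Im (w n) + (Im (w n))^2" and ?B = "\<lambda>n. (2 * Im (w n) + d)^2"
    and ?u = "\<lambda>n. 1 / (Re (w n))^2"
  have "((\<lambda>n. (?A n * ?u n - 1)^2 + ?B n * ?u n) \<longlongrightarrow> ((c + d * 0 + 0^2) * 0 - 1)^2 + (2 * 0 + d)^2 * 0) F"
    by (intro tendsto_intros assms(1) tendsto_inverse_square_0[OF assms(2)])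
  then have lim: "((\<lambda>n. (?A n * ?u n - 1)^2 + ?B n * ?u n) \<longlongrightarrow> 1) F"
    by (rule tendsto_eq_rhs) simp
  have eq: "eventually (\<lambda>n. (?A n * ?u n - 1)^2 + ?B n * ?u n
      = (cmod (damping c d (w n)))^2 / (Re (w n))^4) F"
    using eventually_nonzero_if_abs_at_top[OF assms(2)]
  proof eventually_elim
    case (elim n)
    have norm: "(cmod (damping c d (w n)))^2 = (?A n - (Re (w n))^2)^2 + (Re (w n))^2 * ?B n"
      by (simp add: norm_damping_sq algebra_simps)
    have "(A * (1 / x^2) - 1)^2 + B * (1 / x^2) = ((A - x^2)^2 + x^2 * B) / x^4"
      if "x \<noteq> 0" for A B x :: real
      using that by (simp add: field_simps power2_eq_square power4_eq_xxxx)
    from this[OF elim] show ?case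
      unfolding norm .
  qed
  show "((\<lambda>n. (cmod (damping c d (w n)))^2 / (Re (w n))^4) \<longlongrightarrow> 1) F"
    by (rule Lim_transform_eventually[OF lim eq])
qed

lemma hat_denom_asymp_equiv:
  assumes "d \<noteq> 0" "((\<lambda>n. Im (w n)) \<longlongrightarrow> 0) F" "filterlim (\<lambda>n. \<bar>Re (w n)\<bar>) at_top F"
  shows "(\<lambda>n. hat_denom c d (w n)) \<sim>[F] (\<lambda>n. d * (Re (w n))^2)"
proof (rule asymp_equivI')
  let ?E = "\<lambda>n. d * (Im (w n))^2 + 2 * c * Im (w n)" and ?u = "\<lambda>n. 1 / (Re (w n))^2"
  have "((\<lambda>n. 1 + ?E n / d * ?u n) \<longlongrightarrow> 1 + (d * 0^2 + 2 * c * 0) / d * 0) F"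
    using assms(1) by (intro tendsto_intros assms(2) tendsto_inverse_square_0[OF assms(3)])
  then have lim: "((\<lambda>n. 1 + ?E n / d * ?u n) \<longlongrightarrow> 1) F"
    by (rule tendsto_eq_rhs) simp
  have eq: "eventually (\<lambda>n. 1 + ?E n / d * ?u n = hat_denom c d (w n) / (d * (Re (w n))^2)) F"
    using eventually_nonzero_if_abs_at_top[OF assms(3)]
  proof eventually_elim
    case (elim n)
    have denom: "hat_denom c d (w n) = d * (Re (w n))^2 + ?E n"
      by (simp add: hat_denom_def cmod_power2 algebra_simps)
    have "1 + E / d * (1 / x^2) = (d * x^2 + E) / (d * x^2)" if "x \<noteq> 0" for E x :: real
      using that assms(1) by (simp add: field_simps)
    from this[OF elim] show ?case
      unfolding denom .
  qed
  show "((\<lambda>n. hat_denom c d (w n) / (d * (Re (w n))^2)) \<longlongrightarrow> 1) F"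
    by (rule Lim_transform_eventually[OF lim eq])
qed

lemma beta_hat_asymp_equiv:
  assumes "d \<noteq> 0" "((\<lambda>n. Im (w n)) \<longlongrightarrow> 0) F" "filterlim (\<lambda>n. \<bar>Re (w n)\<bar>) at_top F"
  shows "(\<lambda>n. beta_hat c d (w n)) \<sim>[F] (\<lambda>n. - 2 * Im (w n) * (Re (w n))^2 / d)"
proof -
  have "(\<lambda>n. - 2 * Im (w n) * (cmod (damping c d (w n)))^2 / hat_denom c d (w n))
      \<sim>[F] (\<lambda>n. - 2 * Im (w n) * (Re (w n))^4 / (d * (Re (w n))^2))"
    by (intro asymp_equiv_divide asymp_equiv_mult asymp_equiv_refl
        norm_damping_sq_asymp_equiv hat_denom_asymp_equiv assms)
  moreover have "(\<lambda>n. - 2 * Im (w n) * (Re (w n))^4 / (d * (Re (w n))^2))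
      = (\<lambda>n. - 2 * Im (w n) * (Re (w n))^2 / d)"
    by (rule ext) (simp add: power2_eq_square power4_eq_xxxx)
  ultimately show ?thesis
    unfolding beta_hat_eq by simp
qed

lemma W_Omega_asymptotics:
  assumes "c \<ge> 0" "d > 0" "\<forall>(\<alpha>, \<beta>) \<in> \<Omega>. \<bar>\<beta>\<bar> \<le> M"
    and W: "\<And>n. w n \<in> W_Omega c d \<Omega>" and Re: "filterlim (\<lambda>n. \<bar>Re (w n)\<bar>) at_top sequentially"
  shows "(\<lambda>n. beta_hat c d (w n)) \<sim>[sequentially] (\<lambda>n. - 2 * Im (w n) * (Re (w n))^2 / d)"
    and "(\<lambda>n. Im (w n)) \<in> O[sequentially](\<lambda>n. 1 / (Re (w n))^2)"
proof -
  let ?K = "2 * (c + d) + 2 * c / d + 1" and ?C = "2 * (d + 2 * c) * M"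
  have "eventually (\<lambda>n. ?K < \<bar>Re (w n)\<bar>) sequentially"
    using Re unfolding filterlim_at_top_dense by blast
  then have bound: "eventually (\<lambda>n. norm (Im (w n)) \<le> ?C * norm (1 / (Re (w n))^2)) sequentially"
  proof eventually_elim
    case (elim n)
    have "0 < ?K"
      using assms(1,2) by (simp add: add_pos_nonneg)
    then have "Re (w n) \<noteq> 0" "?K \<le> cmod (w n)"
      using elim abs_Re_le_cmod[of "w n"] by auto
    have "(Re (w n))^2 \<le> (cmod (w n))^2"
      by (simp add: cmod_power2)
    then have "\<bar>Im (w n)\<bar> * (Re (w n))^2 \<le> \<bar>Im (w n)\<bar> * (cmod (w n))^2"
      by (rule mult_left_mono) simp
    also have "\<dots> \<le> ?C"
      using W_Omega_Im_norm_bound[OF assms(1-3) W \<open>Re (w n) \<noteq> 0\<close> \<open>?K \<le> cmod (w n)\<close>] .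
    finally show ?case
      using \<open>Re (w n) \<noteq> 0\<close> by (simp add: pos_le_divide_eq)
  qed
  then show "(\<lambda>n. Im (w n)) \<in> O[sequentially](\<lambda>n. 1 / (Re (w n))^2)"
    by (rule bigoI)
  have "((\<lambda>n. ?C * norm (1 / (Re (w n))^2)) \<longlongrightarrow> ?C * 0) sequentially"
    using tendsto_norm_zero[OF tendsto_inverse_square_0[OF Re]] by (rule tendsto_mult_left)
  then have "((\<lambda>n. Im (w n)) \<longlongrightarrow> 0) sequentially"
    using Lim_null_comparison[OF bound] by simp
  then show "(\<lambda>n. beta_hat c d (w n)) \<sim>[sequentially] (\<lambda>n. - 2 * Im (w n) * (Re (w n))^2 / d)"
    using assms(2) Re by (intro beta_hat_asymp_equiv) auto
qed

theorem corollary2p7: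
  fixes c d :: real and WA WB :: "real set"
  assumes c: "c \<ge> 0" and d: "d > 0"
    and WA: "WA \<noteq> {}" "is_interval WA"
    and WB: "WB \<noteq> {}" "is_interval WB" "bounded WB" "WB \<noteq> {0}"
  shows
    "(\<exists>R. \<forall>\<omega>. Re \<omega> \<noteq> 0 \<and> \<bar>Im \<omega>\<bar> > R \<longrightarrow> \<omega> \<notin> W_Omega c d (Omega WA WB))
     \<and> (\<forall>w :: nat \<Rightarrow> complex.
          (\<forall>n. w n \<in> W_Omega c d (Omega WA WB)) \<and>
          filterlim (\<lambda>n. \<bar>Re (w n)\<bar>) at_top sequentially \<longrightarrow>
            (\<lambda>n. beta_hat c d (w n)) \<sim>[sequentially] (\<lambda>n. - 2 * Im (w n) * (Re (w n))^2 / d)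
            \<and> (\<lambda>n. Im (w n)) \<in> O[sequentially](\<lambda>n. 1 / (Re (w n))^2))
     \<and> (\<forall>\<omega>. Re \<omega> \<noteq> 0 \<and> \<omega> \<notin> circD c d \<longrightarrow>
          (beta_hat c d \<omega> \<ge> 0 \<longleftrightarrow> \<omega> \<in> Pi_beta c d))
     \<and> (\<forall>\<omega>. Re \<omega> \<noteq> 0 \<and> \<omega> \<notin> circD c d \<longrightarrow>
          (alpha_hat c d \<omega> \<ge> 0 \<longleftrightarrow> \<omega> \<in> Pi_alpha c d))"
proof -
  obtain M where "\<forall>\<beta> \<in> closure WB. \<bar>\<beta>\<bar> \<le> M"
    using bounded_closure[OF WB(3)] unfolding bounded_iff real_norm_def by blast
  then have \<Omega>: "\<forall>(\<alpha>, \<beta>) \<in> Omega WA WB. \<bar>\<beta>\<bar> \<le> M"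
    unfolding Omega_def by auto
  show ?thesis
  proof (intro conjI allI impI)
    show "\<exists>R. \<forall>\<omega>. Re \<omega> \<noteq> 0 \<and> \<bar>Im \<omega>\<bar> > R \<longrightarrow> \<omega> \<notin> W_Omega c d (Omega WA WB)"
      by (rule W_Omega_excludes_large_Im[OF c d \<Omega>])
  next
    fix w :: "nat \<Rightarrow> complex"
    assume "(\<forall>n. w n \<in> W_Omega c d (Omega WA WB)) \<and> filterlim (\<lambda>n. \<bar>Re (w n)\<bar>) at_top sequentially"
    then show "(\<lambda>n. beta_hat c d (w n)) \<sim>[sequentially] (\<lambda>n. - 2 * Im (w n) * (Re (w n))^2 / d)"
      and "(\<lambda>n. Im (w n)) \<in> O[sequentially](\<lambda>n. 1 / (Re (w n))^2)"
      using W_Omega_asymptotics[OF c d \<Omega>, of w] by simp_all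
  next
    fix \<omega> assume "Re \<omega> \<noteq> 0 \<and> \<omega> \<notin> circD c d"
    then show "beta_hat c d \<omega> \<ge> 0 \<longleftrightarrow> \<omega> \<in> Pi_beta c d"
      and "alpha_hat c d \<omega> \<ge> 0 \<longleftrightarrow> \<omega> \<in> Pi_alpha c d"
      using beta_hat_nonneg_iff[OF c d] alpha_hat_nonneg_iff[OF c d] by simp_all
  qed
qed

end
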